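(* Let $f,g$ satisfy the standing assumptions below and suppose $\beta\ge\max\{\frac{8M_fQ_g}{\mu^3},\frac{4M_fQ_gL_g}{\mu^{3.5}}\}$. Then for any $(x,y)\in\mathbb{R}^n\times\mathbb{R}^p$ and any $w\in\hat{\mathcal{D}}_p(x,y)$, $\sup_{z\in\mathcal{D}_h(x,y)}\langle z,w\rangle\ge\min\{\frac{\mu^2}{4L_g^2},\frac\mu4\}\|w\|^2$.
   Context: Standing assumptions. (A1) Constants $M_f,\mu,L_g,Q_g>0$ exist such that: $f:\mathbb{R}^n\times\mathbb{R}^p\to\mathbb{R}$ is $M_f$-Lipschitz; $g$ is twice differentiable with $\nabla^2_{yy}g\succeq\mu I_p$; $\nabla g$ is $L_g$-Lipschitz; $\nabla^2_{yy}g,\nabla^2_{xy}g$ are $Q_g$-Lipschitz; $\nabla^2_{yy}g$ is continuously differentiable ($\nabla^2_{xy}g\in\mathbb{R}^{n\times p}$ has entries $\partial^2g/\partial x_i\partial y_j$). (A2) $f$ is a potential function of a conservative field $\mathcal{D}_f$ with compact convex values of norm at most $M_f$. Notation (all at $(x,y)$): $H=\nabla^2_{yy}g$; $\mathcal{A}(x,y):=y-H^{-1}\nabla_yg$; $\nabla^3_{xyy}g(x,y)[d]:=\lim_{t\to0}\frac1t(\nabla^2_{xy}g(x,y+td)-\nabla^2_{xy}g(x,y))$, $\nabla^3_{yyy}g(x,y)[d]:=\lim_{t\to0}\frac1t(\nabla^2_{yy}g(x,y+td)-\nabla^2_{yy}g(x,y))$; $J_{A,x}:=-\nabla^2_{xy}gH^{-1}+\nabla^3_{xyy}g[H^{-1}\nabla_yg]H^{-1}$,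 $J_{A,y}:=\nabla^3_{yyy}g[H^{-1}\nabla_yg]H^{-1}$; $\mathcal{D}_h(x,y):=\{(d_x+J_{A,x}d_y+\beta\nabla^2_{xy}g\nabla_yg,\ J_{A,y}d_y+\beta H\nabla_yg):(d_x,d_y)\in\mathcal{D}_f(x,\mathcal{A}(x,y))\}$; $W(x,y):=[I_n,\ -\nabla^2_{xy}g(x,y)H^{-1}]\in\mathbb{R}^{n\times(n+p)}$; $\hat{\mathcal{D}}_p(x,y):=\{W(x,y)^\top W(x,y)d+(0,\beta\nabla_yg(x,y)):d\in\mathcal{D}_f(x,\mathcal{A}(x,y))\}$. *)

theory Defs
  imports "HOL-Analysis.Analysis"
begin

definition abs_cont_curve :: "(real \<Rightarrow> 'a::real_normed_vector) \<Rightarrow> bool" where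
  "abs_cont_curve \<gamma> \<longleftrightarrow>
     (\<forall>\<epsilon>>0. \<exists>\<delta>>0. \<forall>(I::nat set) a b.
        finite I \<and> (\<forall>k\<in>I. 0 \<le> a k \<and> a k \<le> b k \<and> b k \<le> 1)
        \<and> (\<forall>k\<in>I. \<forall>l\<in>I. k \<noteq> l \<longrightarrow> b k \<le> a l \<or> b l \<le> a k)
        \<and> (\<Sum>k\<in>I. b k - a k) < \<delta>
        \<longrightarrow> (\<Sum>k\<in>I. norm (\<gamma> (b k) - \<gamma> (a k))) < \<epsilon>)"

definition field_curve_integral ::
  "('a::euclidean_space \<Rightarrow> 'a set) \<Rightarrow> (real \<Rightarrow> 'a) \<Rightarrow> real" where
  "field_curve_integral D \<gamma> =
     (LBINT t:{0..1}. Sup ((\<lambda>v. inner (vector_derivative \<gamma> (at t)) v) ` D (\<gamma> t)))"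

definition conservative_field :: "('a::euclidean_space \<Rightarrow> 'a set) \<Rightarrow> bool" where
  "conservative_field D \<longleftrightarrow>
     closed {(z, v). v \<in> D z}
     \<and> (\<forall>z. D z \<noteq> {} \<and> compact (D z))
     \<and> (\<forall>\<gamma>. abs_cont_curve \<gamma> \<and> \<gamma> 0 = \<gamma> 1 \<longrightarrow> field_curve_integral D \<gamma> = 0)"

definition potential_of :: "('a::euclidean_space \<Rightarrow> real) \<Rightarrow> ('a \<Rightarrow> 'a set) \<Rightarrow> bool" where
  "potential_of f D \<longleftrightarrow> conservative_field D \<and>
     (\<forall>\<gamma>. abs_cont_curve \<gamma> \<longrightarrow> f (\<gamma> 1) - f (\<gamma> 0) = field_curve_integral D \<gamma>)"

type_synonym ('n, 'p) pt = "(real^'n) \<times> (real^'p)"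

definition gradx :: "(('n::finite, 'p::finite) pt \<Rightarrow> real) \<Rightarrow> ('n,'p) pt \<Rightarrow> real^'n" where
  "gradx g z = (\<chi> i. frechet_derivative g (at z) (axis i 1, 0))"

definition grady :: "(('n::finite, 'p::finite) pt \<Rightarrow> real) \<Rightarrow> ('n,'p) pt \<Rightarrow> real^'p" where
  "grady g z = (\<chi> j. frechet_derivative g (at z) (0, axis j 1))"

definition Hyy :: "(('n::finite, 'p::finite) pt \<Rightarrow> real) \<Rightarrow> ('n,'p) pt \<Rightarrow> real^'p^'p" where
  "Hyy g z = (\<chi> i j. frechet_derivative (\<lambda>u. grady g u $ j) (at z) (0, axis i 1))"

definition Hxy :: "(('n::finite, 'p::finite) pt \<Rightarrow> real) \<Rightarrow> ('n,'p) pt \<Rightarrow> real^'p^'n" where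
  "Hxy g z = (\<chi> i j. frechet_derivative (\<lambda>u. grady g u $ j) (at z) (axis i 1, 0))"

definition D3xyy :: "(('n::finite, 'p::finite) pt \<Rightarrow> real) \<Rightarrow> real^'n \<Rightarrow> real^'p \<Rightarrow> real^'p \<Rightarrow> real^'p^'n" where
  "D3xyy g x y d = Lim (at 0) (\<lambda>t. (1 / t) *\<^sub>R (Hxy g (x, y + t *\<^sub>R d) - Hxy g (x, y)))"

definition D3yyy :: "(('n::finite, 'p::finite) pt \<Rightarrow> real) \<Rightarrow> real^'n \<Rightarrow> real^'p \<Rightarrow> real^'p \<Rightarrow> real^'p^'p" where
  "D3yyy g x y d = Lim (at 0) (\<lambda>t. (1 / t) *\<^sub>R (Hyy g (x, y + t *\<^sub>R d) - Hyy g (x, y)))"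

definition Amap :: "(('n::finite, 'p::finite) pt \<Rightarrow> real) \<Rightarrow> real^'n \<Rightarrow> real^'p \<Rightarrow> real^'p" where
  "Amap g x y = y - matrix_inv (Hyy g (x, y)) *v grady g (x, y)"

definition JAx :: "(('n::finite, 'p::finite) pt \<Rightarrow> real) \<Rightarrow> real^'n \<Rightarrow> real^'p \<Rightarrow> real^'p^'n" where
  "JAx g x y = (let Hi = matrix_inv (Hyy g (x, y)) in
     - (Hxy g (x, y) ** Hi) + D3xyy g x y (Hi *v grady g (x, y)) ** Hi)"

definition JAy :: "(('n::finite, 'p::finite) pt \<Rightarrow> real) \<Rightarrow> real^'n \<Rightarrow> real^'p \<Rightarrow> real^'p^'p" where
  "JAy g x y = (let Hi = matrix_inv (Hyy g (x, y)) in
     D3yyy g x y (Hi *v grady g (x, y)) ** Hi)"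

definition Dh :: "(('n::finite, 'p::finite) pt \<Rightarrow> real) \<Rightarrow> (('n,'p) pt \<Rightarrow> ('n,'p) pt set)
                  \<Rightarrow> real \<Rightarrow> real^'n \<Rightarrow> real^'p \<Rightarrow> ('n,'p) pt set" where
  "Dh g Df \<beta> x y =
     (\<lambda>(dx, dy). (dx + JAx g x y *v dy + \<beta> *\<^sub>R (Hxy g (x, y) *v grady g (x, y)),
                  JAy g x y *v dy + \<beta> *\<^sub>R (Hyy g (x, y) *v grady g (x, y))))
     ` Df (x, Amap g x y)"

definition Wmap :: "(('n::finite, 'p::finite) pt \<Rightarrow> real) \<Rightarrow> real^'n \<Rightarrow> real^'p \<Rightarrow> ('n,'p) pt \<Rightarrow> real^'n" where
  "Wmap g x y d = fst d - (Hxy g (x, y) ** matrix_inv (Hyy g (x, y))) *v snd d"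

definition WTmap :: "(('n::finite, 'p::finite) pt \<Rightarrow> real) \<Rightarrow> real^'n \<Rightarrow> real^'p \<Rightarrow> real^'n \<Rightarrow> ('n,'p) pt" where
  "WTmap g x y v = (v, - (transpose (Hxy g (x, y) ** matrix_inv (Hyy g (x, y))) *v v))"

definition Dp_hat :: "(('n::finite, 'p::finite) pt \<Rightarrow> real) \<Rightarrow> (('n,'p) pt \<Rightarrow> ('n,'p) pt set)
                  \<Rightarrow> real \<Rightarrow> real^'n \<Rightarrow> real^'p \<Rightarrow> ('n,'p) pt set" where
  "Dp_hat g Df \<beta> x y =
     (\<lambda>d. WTmap g x y (Wmap g x y d) + (0, \<beta> *\<^sub>R grady g (x, y))) ` Df (x, Amap g x y)"

end

theory Submission
  imports Defs
begin

(* Take d = (dx, dy) in Df(x, A(x,y)), write H, B for the two Hessian blocks, G for the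
   y-gradient of g, u = dx - B H^-1 dy and q = (B H^-1)^T u, so that w = (u, -q + beta G).
   Expanding <z, w> for the element z of Dh built from the same d, the two cross terms
   beta <B G, u> and -beta <H G, q> cancel, leaving
     |u|^2 + beta^2 <H G, G> + (terms of size at most Qg |G| Mf / mu^2 times |u|, |q| or beta |G|),
   the error terms coming from the third derivatives of g, bounded by Lipschitz continuity of
   the Hessian blocks.  Since mu |G|^2 <= <H G, G>, |q| <= Lg |u| / mu and
   |w|^2 <= |u|^2 + (Lg |u| / mu + beta |G|)^2, the lower bound on beta lets the penalty term
   absorb the error terms. *)

section \<open>Symmetry of mixed partial derivatives\<close>

lemma abs_diff_le_of_deriv_bound:
  fixes f f' :: "real \<Rightarrow> real"
  assumes "\<And>x. \<bar>x\<bar> < r \<Longrightarrow> (f has_real_derivative f' x) (at x)"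
    and "\<And>x. \<bar>x\<bar> < r \<Longrightarrow> \<bar>f' x\<bar> \<le> B" and "\<bar>a\<bar> < r" and "\<bar>b\<bar> < r"
  shows "\<bar>f b - f a\<bar> \<le> B * \<bar>b - a\<bar>"
  using field_differentiable_bound[OF convex_ball, of 0 r f f' B b a] assms
  by (auto intro: has_field_derivative_at_within)

lemma mixed_difference_bound:
  fixes F Ft Fts :: "real \<Rightarrow> real \<Rightarrow> real"
  assumes Ft: "\<And>s t. ((\<lambda>t. F s t) has_real_derivative Ft s t) (at t)"
    and Fts: "\<And>s t. ((\<lambda>s. Ft s t) has_real_derivative Fts s t) (at s)"
    and close: "\<And>s t. \<bar>s\<bar> < r \<Longrightarrow> \<bar>t\<bar> < r \<Longrightarrow> \<bar>Fts s t - L\<bar> \<le> e"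
    and s: "\<bar>s\<bar> < r" and t: "\<bar>t\<bar> < r"
  shows "\<bar>(F s t - F 0 t) - (F s 0 - F 0 0) - s * t * L\<bar> \<le> e * \<bar>s\<bar> * \<bar>t\<bar>"
proof -
  have "\<bar>(Ft s \<tau> - s * L) - (Ft 0 \<tau> - 0 * L)\<bar> \<le> e * \<bar>s - 0\<bar>" if "\<bar>\<tau>\<bar> < r" for \<tau>
    using s that close
    by (intro abs_diff_le_of_deriv_bound[of r "\<lambda>\<sigma>. Ft \<sigma> \<tau> - \<sigma> * L"])
       (auto intro!: derivative_eq_intros Fts)
  then have "\<bar>(F s t - F 0 t - t * (s * L)) - (F s 0 - F 0 0 - 0 * (s * L))\<bar> \<le> e * \<bar>s\<bar> * \<bar>t - 0\<bar>"
    using s t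
    by (intro abs_diff_le_of_deriv_bound[of r "\<lambda>\<tau>. F s \<tau> - F 0 \<tau> - \<tau> * (s * L)"])
       (auto intro!: derivative_eq_intros Ft simp: algebra_simps)
  then show ?thesis by (simp add: algebra_simps)
qed

lemma mixed_partial_increment_le:
  fixes F Fs Ft Fts :: "real \<Rightarrow> real \<Rightarrow> real"
  assumes Fs: "\<And>s t. ((\<lambda>s. F s t) has_real_derivative Fs s t) (at s)"
    and Ft: "\<And>s t. ((\<lambda>t. F s t) has_real_derivative Ft s t) (at t)"
    and Fts: "\<And>s t. ((\<lambda>s. Ft s t) has_real_derivative Fts s t) (at s)"
    and cont: "isCont (\<lambda>(s, t). Fts s t) (0, 0)" and "e > 0"
  shows "\<exists>r>0. \<forall>t. \<bar>t\<bar> < r \<longrightarrow> \<bar>Fs 0 t - Fs 0 0 - t * Fts 0 0\<bar> \<le> e * \<bar>t\<bar>"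
proof -
  define L where "L = Fts 0 0"
  obtain \<delta> where \<delta>: "\<delta> > 0" "\<And>z. dist z (0, 0) < \<delta> \<Longrightarrow> \<bar>(\<lambda>(s, t). Fts s t) z - L\<bar> < e"
    using cont \<open>e > 0\<close> unfolding continuous_at_eps_delta L_def dist_real_def by fastforce
  define r where "r = \<delta> / 2"
  have close: "\<bar>Fts s t - L\<bar> \<le> e" if "\<bar>s\<bar> < r" "\<bar>t\<bar> < r" for s t
  proof -
    have "dist (s, t) (0, 0) < \<delta>"
      using norm_Pair_le[of s t] that by (simp add: dist_norm r_def)
    then show ?thesis using \<delta>(2) by fastforce
  qed
  have "\<bar>Fs 0 t - Fs 0 0 - t * L\<bar> \<le> e * \<bar>t\<bar>" if t: "\<bar>t\<bar> < r" for t
  proof -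
    have "((\<lambda>s. (F s t - F 0 t) / (s - 0) - (F s 0 - F 0 0) / (s - 0) - t * L)
            \<longlongrightarrow> Fs 0 t - Fs 0 0 - t * L) (at 0)"
      using Fs[where s=0 and t=t] Fs[where s=0 and t=0]
      by (intro tendsto_intros) (simp_all add: has_field_derivative_iff)
    moreover have "\<forall>\<^sub>F s in at 0. norm ((F s t - F 0 t) / (s - 0) - (F s 0 - F 0 0) / (s - 0) - t * L)
            \<le> e * \<bar>t\<bar>"
      unfolding eventually_at
    proof (intro exI[of _ r] conjI ballI impI)
      fix s :: real assume s: "s \<noteq> 0 \<and> dist s 0 < r"
      have "\<bar>(F s t - F 0 t) - (F s 0 - F 0 0) - s * t * L\<bar> \<le> e * \<bar>s\<bar> * \<bar>t\<bar>"
        using s t by (intro mixed_difference_bound[OF Ft Fts close]) auto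
      moreover have "(F s t - F 0 t) / (s - 0) - (F s 0 - F 0 0) / (s - 0) - t * L
          = ((F s t - F 0 t) - (F s 0 - F 0 0) - s * t * L) / s"
        using s by (simp add: field_simps)
      ultimately show "norm ((F s t - F 0 t) / (s - 0) - (F s 0 - F 0 0) / (s - 0) - t * L) \<le> e * \<bar>t\<bar>"
        using s by (simp add: pos_divide_le_eq mult_ac)
    qed (simp add: r_def \<delta>)
    ultimately have "norm (Fs 0 t - Fs 0 0 - t * L) \<le> e * \<bar>t\<bar>"
      by (intro Lim_norm_ubound) auto
    then show ?thesis by simp
  qed
  then show ?thesis using \<delta>(1) by (auto simp: r_def L_def intro!: exI[of _ r])
qed

lemma has_real_derivative_mixed_partial:
  fixes F Fs Ft Fts :: "real \<Rightarrow> real \<Rightarrow> real"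
  assumes Fs: "\<And>s t. ((\<lambda>s. F s t) has_real_derivative Fs s t) (at s)"
    and Ft: "\<And>s t. ((\<lambda>t. F s t) has_real_derivative Ft s t) (at t)"
    and Fts: "\<And>s t. ((\<lambda>s. Ft s t) has_real_derivative Fts s t) (at s)"
    and cont: "isCont (\<lambda>(s, t). Fts s t) (0, 0)"
  shows "((\<lambda>t. Fs 0 t) has_real_derivative Fts 0 0) (at 0)"
proof -
  define L where "L = Fts 0 0"
  have "((\<lambda>t. (Fs 0 t - Fs 0 0) / (t - 0)) \<longlongrightarrow> L) (at 0)"
  proof (rule tendstoI)
    fix \<epsilon> :: real assume "\<epsilon> > 0"
    then obtain r where r: "r > 0" "\<And>t. \<bar>t\<bar> < r \<Longrightarrow> \<bar>Fs 0 t - Fs 0 0 - t * L\<bar> \<le> \<epsilon> / 2 * \<bar>t\<bar>"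
      using mixed_partial_increment_le[OF Fs Ft Fts cont, of "\<epsilon> / 2"] unfolding L_def by auto
    show "\<forall>\<^sub>F t in at 0. dist ((Fs 0 t - Fs 0 0) / (t - 0)) L < \<epsilon>"
      unfolding eventually_at
    proof (intro exI[of _ r] conjI ballI impI)
      fix t :: real assume t: "t \<noteq> 0 \<and> dist t 0 < r"
      then have "\<bar>Fs 0 t - Fs 0 0 - t * L\<bar> / \<bar>t\<bar> \<le> \<epsilon> / 2"
        using r(2)[of t] by (simp add: divide_le_eq)
      moreover have "dist ((Fs 0 t - Fs 0 0) / (t - 0)) L = \<bar>Fs 0 t - Fs 0 0 - t * L\<bar> / \<bar>t\<bar>"
        using t by (simp add: dist_real_def diff_divide_distrib flip: abs_divide)
      ultimately show "dist ((Fs 0 t - Fs 0 0) / (t - 0)) L < \<epsilon>"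
        using \<open>\<epsilon> > 0\<close> by linarith
    qed (rule r(1))
  qed
  then show ?thesis unfolding L_def by (simp add: has_field_derivative_iff)
qed

lemma has_real_derivative_along_line:
  fixes G :: "'a::real_normed_vector \<Rightarrow> real"
  assumes "(G has_derivative G') (at (p + s *\<^sub>R q))"
  shows "((\<lambda>s. G (p + s *\<^sub>R q)) has_real_derivative G' q) (at s)"
proof -
  have "((\<lambda>s. p + s *\<^sub>R q) has_derivative (\<lambda>h. h *\<^sub>R q)) (at s)"
    by (auto intro!: derivative_eq_intros)
  from diff_chain_at[OF this assms]
  have "((\<lambda>s. G (p + s *\<^sub>R q)) has_derivative G' \<circ> (\<lambda>h. h *\<^sub>R q)) (at s)"
    by (simp add: o_def)
  moreover have "G' \<circ> (\<lambda>h. h *\<^sub>R q) = (*) (G' q)"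
    using linear_cmul[OF has_derivative_linear[OF assms]] by (auto simp: o_def mult.commute)
  ultimately show ?thesis by (simp add: has_field_derivative_def)
qed

lemma has_real_derivative_directional_derivative_swap:
  fixes \<phi> :: "'a::real_normed_vector \<Rightarrow> real"
  assumes \<phi>: "\<And>z. (\<phi> has_derivative \<phi>' z) (at z)"
    and \<psi>: "\<And>z. ((\<lambda>z. \<phi>' z v) has_derivative \<psi>' z) (at z)"
    and cont: "isCont (\<lambda>z. \<psi>' z u) z0"
  shows "((\<lambda>t. \<phi>' (z0 + t *\<^sub>R v) u) has_real_derivative \<psi>' z0 u) (at 0)"
proof -
  define pt where "pt s t = z0 + s *\<^sub>R u + t *\<^sub>R v" for s t
  have "((\<lambda>t. \<phi>' (pt 0 t) u) has_real_derivative \<psi>' (pt 0 0) u) (at 0)"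
  proof (rule has_real_derivative_mixed_partial[where F="\<lambda>s t. \<phi> (pt s t)"
        and Fs="\<lambda>s t. \<phi>' (pt s t) u" and Ft="\<lambda>s t. \<phi>' (pt s t) v" and Fts="\<lambda>s t. \<psi>' (pt s t) u"])
    fix s t
    show "((\<lambda>s. \<phi> (pt s t)) has_real_derivative \<phi>' (pt s t) u) (at s)"
      using has_real_derivative_along_line[OF \<phi>[of "(z0 + t *\<^sub>R v) + s *\<^sub>R u"]]
      by (simp add: pt_def algebra_simps)
    show "((\<lambda>t. \<phi> (pt s t)) has_real_derivative \<phi>' (pt s t) v) (at t)"
      using has_real_derivative_along_line[OF \<phi>[of "(z0 + s *\<^sub>R u) + t *\<^sub>R v"]]
      by (simp add: pt_def algebra_simps)
    show "((\<lambda>s. \<phi>' (pt s t) v) has_real_derivative \<psi>' (pt s t) u) (at s)"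
      using has_real_derivative_along_line[OF \<psi>[of "(z0 + t *\<^sub>R v) + s *\<^sub>R u"]]
      by (simp add: pt_def algebra_simps)
  next
    have "isCont (\<lambda>st. pt (fst st) (snd st)) (0, 0)"
      unfolding pt_def by (intro continuous_intros)
    moreover have "isCont (\<lambda>z. \<psi>' z u) (pt (fst (0, 0)) (snd (0, 0)))"
      using cont by (simp add: pt_def)
    ultimately show "isCont (\<lambda>(s, t). \<psi>' (pt s t) u) (0, 0)"
      unfolding case_prod_beta by (rule isCont_o2)
  qed
  then show ?thesis by (simp add: pt_def)
qed

lemma tendsto_matrix_difference_quotient:
  fixes M :: "real \<Rightarrow> real^'m^'n"
  assumes "\<And>i j. ((\<lambda>t. M t $ i $ j) has_real_derivative M' i j) (at 0)"
  shows "((\<lambda>t. (1 / t) *\<^sub>R (M t - M 0)) \<longlongrightarrow> (\<chi> i j. M' i j)) (at 0)"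
proof (intro vec_tendstoI)
  fix i j
  have "((\<lambda>t. (M t $ i $ j - M 0 $ i $ j) / (t - 0)) \<longlongrightarrow> M' i j) (at 0)"
    using assms[of i j] by (simp add: has_field_derivative_iff)
  then show "((\<lambda>t. ((1 / t) *\<^sub>R (M t - M 0)) $ i $ j) \<longlongrightarrow> (\<chi> i j. M' i j) $ i $ j) (at 0)"
    by simp
qed

lemma norm_Lim_difference_quotient_mult_le:
  fixes M :: "real \<Rightarrow> real^'m^'n"
  assumes conv: "((\<lambda>t. (1 / t) *\<^sub>R (M t - M0)) \<longlongrightarrow> M') (at 0)"
    and lip: "\<And>t. onorm (\<lambda>v. (M t - M0) *v v) \<le> Q * \<bar>t\<bar>"
  shows "norm (Lim (at 0) (\<lambda>t. (1 / t) *\<^sub>R (M t - M0)) *v w) \<le> Q * norm w"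
proof -
  have "((\<lambda>t. Q' t *v w) \<longlongrightarrow> M' *v w) (at 0)" if "(Q' \<longlongrightarrow> M') (at 0)"
    for Q' :: "real \<Rightarrow> real^'m^'n"
    unfolding matrix_vector_mult_def by (intro vec_tendstoI) (simp, intro tendsto_intros that)
  from this[OF conv]
  have "((\<lambda>t. ((1 / t) *\<^sub>R (M t - M0)) *v w) \<longlongrightarrow> M' *v w) (at 0)" .
  moreover have "\<forall>\<^sub>F t in at 0. norm (((1 / t) *\<^sub>R (M t - M0)) *v w) \<le> Q * norm w"
    unfolding eventually_at
  proof (intro exI[of _ 1] conjI ballI impI)
    fix t :: real assume "t \<noteq> 0 \<and> dist t 0 < 1"
    then have t: "\<bar>t\<bar> > 0" by simp
    have "norm ((M t - M0) *v w) \<le> onorm (\<lambda>v. (M t - M0) *v v) * norm w"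
      by (rule onorm) simp
    also have "\<dots> \<le> Q * \<bar>t\<bar> * norm w" by (rule mult_right_mono[OF lip]) simp
    finally show "norm (((1 / t) *\<^sub>R (M t - M0)) *v w) \<le> Q * norm w"
      using t by (simp add: pos_divide_le_eq mult_ac flip: scaleR_matrix_vector_assoc)
  qed simp
  ultimately have "norm (M' *v w) \<le> Q * norm w" by (intro Lim_norm_ubound) auto
  moreover have "Lim (at 0) (\<lambda>t. (1 / t) *\<^sub>R (M t - M0)) = M'"
    using conv by (intro tendsto_Lim) auto
  ultimately show ?thesis by simp
qed

lemma lipschitz_on_has_derivative_norm_le:
  fixes f :: "'a::real_normed_vector \<Rightarrow> 'b::real_normed_vector"
  assumes lip: "L-lipschitz_on UNIV f" and f': "(f has_derivative f') (at z)"
  shows "norm (f' h) \<le> L * norm h"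
proof (cases "h = 0")
  case True
  then show ?thesis using linear_0[OF has_derivative_linear[OF f']] by simp
next
  case False
  then have h: "norm h > 0" by simp
  show ?thesis
  proof (rule field_le_epsilon)
    fix e :: real assume "e > 0"
    with f' h obtain \<delta> where \<delta>: "\<delta> > 0"
      "\<And>y. norm (y - z) < \<delta> \<Longrightarrow> norm (f y - f z - f' (y - z)) \<le> e / norm h * norm (y - z)"
      unfolding has_derivative_at_alt by (meson divide_pos_pos)
    define t where "t = \<delta> / (2 * norm h)"
    have t: "t > 0" "norm (t *\<^sub>R h) < \<delta>" using \<delta>(1) h by (auto simp: t_def)
    have "norm (f' (t *\<^sub>R h)) \<le> norm (f (z + t *\<^sub>R h) - f z) + norm (f (z + t *\<^sub>R h) - f z - f' (t *\<^sub>R h))"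
      using norm_triangle_sub[of "f' (t *\<^sub>R h)" "f (z + t *\<^sub>R h) - f z"] by (simp add: norm_minus_commute)
    also have "\<dots> \<le> L * norm (t *\<^sub>R h) + e / norm h * norm (t *\<^sub>R h)"
      using lipschitz_onD[OF lip, of "z + t *\<^sub>R h" z] \<delta>(2)[of "z + t *\<^sub>R h"] t
      by (intro add_mono) (auto simp: dist_norm)
    finally have "t * norm (f' h) \<le> t * (L * norm h + e)"
      using t h by (simp add: linear_cmul[OF has_derivative_linear[OF f']] field_simps)
    then show "norm (f' h) \<le> L * norm h + e" using t by simp
  qed
qed

lemma has_derivative_vec_nth_vec_nth:
  fixes M :: "'a::real_normed_vector \<Rightarrow> real^'m^'n"
  assumes "(M has_derivative M') F"
  shows "((\<lambda>z. M z $ i $ j) has_derivative (\<lambda>h. M' h $ i $ j)) F"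
  using bounded_linear_compose[OF bounded_linear_vec_nth bounded_linear_vec_nth] assms
  by (rule bounded_linear.has_derivative)

lemma bounded_linear_vector_matrix_mult_right:
  fixes x :: "real^'n"
  shows "bounded_linear (\<lambda>A :: real^'m^'n. x v* A)"
  unfolding linear_conv_bounded_linear[symmetric]
  by (rule linearI) (simp_all add: vector_matrix_mult_add_rdistrib vector_scaleR_matrix_ac)

lemma differentiable_snd_pair:
  assumes "(\<lambda>u. (f u, h u)) differentiable F"
  shows "h differentiable F"
  using has_derivative_snd assms unfolding differentiable_def by fastforce

lemma lipschitz_on_snd_pair:
  assumes "L-lipschitz_on S (\<lambda>u. (f u, h u))"
  shows "L-lipschitz_on S h"
proof (rule lipschitz_onI)
  show "dist (h x) (h y) \<le> L * dist x y" if "x \<in> S" "y \<in> S" for x y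
    using dist_snd_le[of "(f x, h x)" "(f y, h y)"] lipschitz_onD[OF assms that] by simp
  show "0 \<le> L" using lipschitz_on_nonneg[OF assms] .
qed

section \<open>Coercive matrices\<close>

lemma norm_le_divide_of_coercive:
  fixes r q :: "'a::real_inner"
  assumes "\<mu> > 0" and "\<mu> * (r \<bullet> r) \<le> r \<bullet> q"
  shows "norm r \<le> norm q / \<mu>"
proof -
  have "norm r * (\<mu> * norm r) \<le> norm r * norm q"
    using assms(2) norm_cauchy_schwarz[of r q]
    by (simp add: power2_norm_eq_inner[symmetric] power2_eq_square mult_ac)
  then have "\<mu> * norm r \<le> norm q" if "norm r > 0" using that by simp
  then show ?thesis using assms(1) by (cases "norm r > 0") (auto simp: field_simps)
qed

lemma coercive_matrix_inv:
  fixes H :: "real^'n^'n"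
  assumes \<mu>: "\<mu> > 0" and coercive: "\<And>v. \<mu> * (v \<bullet> v) \<le> v \<bullet> (H *v v)"
  shows "H ** matrix_inv H = mat 1 \<and> matrix_inv H ** H = mat 1"
proof -
  have "v = 0" if "H *v v = 0" for v
    using coercive[of v] \<mu> that
    by (simp add: mult_le_0_iff) (metis antisym inner_ge_zero inner_eq_zero_iff)
  then have "invertible H"
    by (auto simp: invertible_left_inverse matrix_left_invertible_ker)
  then show ?thesis unfolding matrix_inv_def invertible_def by (rule someI_ex)
qed

lemma norm_matrix_inv_mult_le:
  fixes H :: "real^'n^'n"
  assumes \<mu>: "\<mu> > 0" and coercive: "\<And>v. \<mu> * (v \<bullet> v) \<le> v \<bullet> (H *v v)"
  shows "norm (matrix_inv H *v q) \<le> norm q / \<mu>"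
proof (rule norm_le_divide_of_coercive[OF \<mu>])
  have "H *v (matrix_inv H *v q) = q"
    using coercive_matrix_inv[OF \<mu> coercive] by (simp add: matrix_vector_mul_assoc)
  then show "\<mu> * ((matrix_inv H *v q) \<bullet> (matrix_inv H *v q)) \<le> (matrix_inv H *v q) \<bullet> q"
    using coercive[of "matrix_inv H *v q"] by simp
qed

lemma norm_transpose_matrix_inv_mult_le:
  fixes H :: "real^'n^'n"
  assumes \<mu>: "\<mu> > 0" and coercive: "\<And>v. \<mu> * (v \<bullet> v) \<le> v \<bullet> (H *v v)"
  shows "norm (transpose (matrix_inv H) *v q) \<le> norm q / \<mu>"
proof (rule norm_le_divide_of_coercive[OF \<mu>])
  define r where "r = transpose (matrix_inv H) *v q"
  have "transpose H *v r = transpose (matrix_inv H ** H) *v q"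
    unfolding r_def by (simp only: matrix_vector_mul_assoc matrix_transpose_mul)
  then have "transpose H *v r = q"
    using coercive_matrix_inv[OF \<mu> coercive] by simp
  moreover have "r \<bullet> (transpose H *v r) = r \<bullet> (H *v r)"
    by (simp only: transpose_matrix_vector inner_commute[of r "r v* H"] dot_lmul_matrix)
  ultimately show "\<mu> * (r \<bullet> r) \<le> r \<bullet> q"
    using coercive[of r] by simp
qed

section \<open>Second and third derivatives of the lower-level function\<close>

lemma frechet_derivative_grady_component:
  assumes "grady g differentiable (at z)"
  shows "frechet_derivative (\<lambda>u. grady g u $ j) (at z) = (\<lambda>h. frechet_derivative (grady g) (at z) h $ j)"
  using assms bounded_linear.has_derivative[OF bounded_linear_vec_nth]
  by (metis frechet_derivative_at frechet_derivative_works)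

lemma linear_Pair_axis_expansion:
  fixes D :: "(real^'n) \<times> (real^'p) \<Rightarrow> 'a::real_vector"
  assumes lin: "linear D"
  shows "D (u, v) = (\<Sum>k\<in>UNIV. u $ k *\<^sub>R D (axis k 1, 0)) + (\<Sum>k\<in>UNIV. v $ k *\<^sub>R D (0, axis k 1))"
proof -
  have "(u, v) = (\<Sum>k\<in>UNIV. u $ k *\<^sub>R (axis k 1, 0)) + (\<Sum>k\<in>UNIV. v $ k *\<^sub>R (0, axis k 1))"
    by (simp add: prod_eq_iff fst_sum snd_sum
        basis_expansion[of u, unfolded scalar_mult_eq_scaleR] basis_expansion[of v, unfolded scalar_mult_eq_scaleR])
  then have "D (u, v) = D ((\<Sum>k\<in>UNIV. u $ k *\<^sub>R (axis k 1, 0)) + (\<Sum>k\<in>UNIV. v $ k *\<^sub>R (0, axis k 1)))"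
    by (rule arg_cong)
  then show ?thesis
    by (simp only: linear_add[OF lin] linear_sum[OF lin] linear_cmul[OF lin])
qed

lemma linear_frechet_derivative_grady:
  assumes "grady g differentiable (at z)"
  shows "linear (frechet_derivative (grady g) (at z))"
  using has_derivative_linear assms unfolding frechet_derivative_works by blast

lemma vector_matrix_mult_Hyy:
  assumes "grady g differentiable (at z)"
  shows "v v* Hyy g z = frechet_derivative (grady g) (at z) (0, v)"
  using assms
  by (simp add: vec_eq_iff linear_Pair_axis_expansion[OF linear_frechet_derivative_grady[OF assms], of 0 v]
      Hyy_def vector_matrix_mult_def frechet_derivative_grady_component mult.commute)

lemma vector_matrix_mult_Hxy:
  assumes "grady g differentiable (at z)"
  shows "u v* Hxy g z = frechet_derivative (grady g) (at z) (u, 0)"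
  using assms
  by (simp add: vec_eq_iff linear_Pair_axis_expansion[OF linear_frechet_derivative_grady[OF assms], of u 0]
      Hxy_def vector_matrix_mult_def frechet_derivative_grady_component mult.commute)

lemma norm_vector_matrix_mult_Hxy_le:
  assumes "Lg-lipschitz_on UNIV (grady g)" and "grady g differentiable (at z)"
  shows "norm (u v* Hxy g z) \<le> Lg * norm u"
  using lipschitz_on_has_derivative_norm_le[OF assms(1) assms(2)[unfolded frechet_derivative_works],
      of "(u, 0)"] assms(2)
  by (simp add: vector_matrix_mult_Hxy norm_Pair)

lemma coercivity_le_lipschitz:
  fixes g :: "(real^'n) \<times> (real^'p) \<Rightarrow> real"
  assumes coercive: "\<And>v. \<mu> * (v \<bullet> v) \<le> v \<bullet> (Hyy g z *v v)"
    and lip: "Lg-lipschitz_on UNIV (grady g)" and diff: "grady g differentiable (at z)"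
  shows "\<mu> \<le> Lg"
proof -
  define v :: "real^'p" where "v = axis undefined 1"
  have v: "norm v = 1" "v \<bullet> v = 1" by (simp_all add: v_def inner_axis_axis)
  have "\<mu> \<le> v \<bullet> (Hyy g z *v v)" using coercive[of v] v by simp
  also have "\<dots> = (v v* Hyy g z) \<bullet> v"
    by (simp only: dot_lmul_matrix)
  also have "\<dots> \<le> norm (frechet_derivative (grady g) (at z) (0, v))"
    using norm_cauchy_schwarz[of "v v* Hyy g z" v] v diff by (simp add: vector_matrix_mult_Hyy)
  also have "\<dots> \<le> Lg * norm (0 :: real^'n, v)"
    using diff unfolding frechet_derivative_works by (rule lipschitz_on_has_derivative_norm_le[OF lip])
  finally show ?thesis using v by (simp add: norm_Pair)
qed

(* D3xyy and D3yyy are defined with Lim, which says nothing unless the limit exists. *)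
lemma D3yyy_difference_quotient_tendsto:
  assumes D': "\<And>z. (Hyy g has_derivative blinfun_apply (D' z)) (at z)"
  shows "((\<lambda>t. (1 / t) *\<^sub>R (Hyy g (x, y + t *\<^sub>R d) - Hyy g (x, y)))
           \<longlongrightarrow> blinfun_apply (D' (x, y)) (0, d)) (at 0)"
proof -
  have "((\<lambda>t. Hyy g ((x, y) + t *\<^sub>R (0, d)) $ i $ j) has_real_derivative
          blinfun_apply (D' ((x, y) + 0 *\<^sub>R (0, d))) (0, d) $ i $ j) (at 0)" for i j
    by (rule has_real_derivative_along_line[OF has_derivative_vec_nth_vec_nth[OF D']])
  then have "((\<lambda>t. (1 / t) *\<^sub>R (Hyy g (x, y + t *\<^sub>R d) - Hyy g (x, y + 0 *\<^sub>R d)))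
      \<longlongrightarrow> (\<chi> i j. blinfun_apply (D' (x, y)) (0, d) $ i $ j)) (at 0)"
    by (intro tendsto_matrix_difference_quotient) simp
  then show ?thesis by simp
qed

(* The entries of Hxy are x-derivatives of grady, so differentiating them in y means swapping
   the order of differentiation: this is where continuity of the derivative of Hyy is used. *)
lemma D3xyy_difference_quotient_tendsto:
  fixes g :: "(real^'n) \<times> (real^'p) \<Rightarrow> real"
  assumes diff: "\<And>z. grady g differentiable (at z)"
    and D': "\<And>z. (Hyy g has_derivative blinfun_apply (D' z)) (at z)" and cont: "continuous_on UNIV D'"
  shows "((\<lambda>t. (1 / t) *\<^sub>R (Hxy g (x, y + t *\<^sub>R d) - Hxy g (x, y)))
           \<longlongrightarrow> (\<chi> i j. (d v* blinfun_apply (D' (x, y)) (axis i 1, 0)) $ j)) (at 0)"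
proof -
  define \<phi>' where "\<phi>' j z h = frechet_derivative (grady g) (at z) h $ j" for j z h
  have Hxy: "Hxy g z $ i $ j = \<phi>' j z (axis i 1, 0)" for z i j
    using diff by (simp add: Hxy_def \<phi>'_def frechet_derivative_grady_component)
  have "((\<lambda>t. \<phi>' j ((x, y) + t *\<^sub>R (0, d)) (axis i 1, 0)) has_real_derivative
          (d v* blinfun_apply (D' (x, y)) (axis i 1, 0)) $ j) (at 0)" for i j
  proof (rule has_real_derivative_directional_derivative_swap)
    show "((\<lambda>u. grady g u $ j) has_derivative \<phi>' j z) (at z)" for z
      using bounded_linear.has_derivative[OF bounded_linear_vec_nth] diff
      unfolding \<phi>'_def frechet_derivative_works by blast
    have bl: "bounded_linear (\<lambda>A :: real^'p^'p. (d v* A) $ j)"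
      by (rule bounded_linear_compose[OF bounded_linear_vec_nth bounded_linear_vector_matrix_mult_right])
    have "(\<lambda>z. \<phi>' j z (0, d)) = (\<lambda>z. (d v* Hyy g z) $ j)"
      using diff by (simp add: \<phi>'_def vector_matrix_mult_Hyy)
    then show "((\<lambda>z. \<phi>' j z (0, d)) has_derivative (\<lambda>h. (d v* blinfun_apply (D' z) h) $ j)) (at z)" for z
      by (simp only:) (rule bounded_linear.has_derivative[OF bl D'])
    have "isCont D' (x, y)"
      using cont by (simp add: continuous_on_eq_continuous_at)
    moreover have "bounded_linear (\<lambda>L. (d v* blinfun_apply L (axis i 1, 0)) $ j)"
      by (rule bounded_linear_compose[OF bl blinfun.bounded_linear_left])
    ultimately show "isCont (\<lambda>z. (d v* blinfun_apply (D' z) (axis i 1, 0)) $ j) (x, y)"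
      by (rule isCont_o2[OF _ linear_continuous_at])
  qed
  then have "((\<lambda>t. (1 / t) *\<^sub>R (Hxy g (x, y + t *\<^sub>R d) - Hxy g (x, y + 0 *\<^sub>R d)))
      \<longlongrightarrow> (\<chi> i j. (d v* blinfun_apply (D' (x, y)) (axis i 1, 0)) $ j)) (at 0)"
    by (intro tendsto_matrix_difference_quotient) (simp add: Hxy)
  then show ?thesis by simp
qed

lemma norm_D3yyy_mult_le:
  assumes D': "\<And>z. (Hyy g has_derivative blinfun_apply (D' z)) (at z)"
    and lip: "\<And>z z'. onorm (\<lambda>v. (Hyy g z - Hyy g z') *v v) \<le> Qg * dist z z'"
  shows "norm (D3yyy g x y d *v w) \<le> Qg * norm d * norm w"
  unfolding D3yyy_def
proof (rule norm_Lim_difference_quotient_mult_le[OF D3yyy_difference_quotient_tendsto[OF D']])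
  show "onorm (\<lambda>v. (Hyy g (x, y + t *\<^sub>R d) - Hyy g (x, y)) *v v) \<le> Qg * norm d * \<bar>t\<bar>" for t
    using lip[of "(x, y + t *\<^sub>R d)" "(x, y)"] by (simp add: dist_norm norm_Pair mult_ac)
qed

lemma norm_D3xyy_mult_le:
  assumes diff: "\<And>z. grady g differentiable (at z)"
    and D': "\<And>z. (Hyy g has_derivative blinfun_apply (D' z)) (at z)" and cont: "continuous_on UNIV D'"
    and lip: "\<And>z z'. onorm (\<lambda>v. (Hxy g z - Hxy g z') *v v) \<le> Qg * dist z z'"
  shows "norm (D3xyy g x y d *v w) \<le> Qg * norm d * norm w"
  unfolding D3xyy_def
proof (rule norm_Lim_difference_quotient_mult_le[OF D3xyy_difference_quotient_tendsto[OF diff D' cont]])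
  show "onorm (\<lambda>v. (Hxy g (x, y + t *\<^sub>R d) - Hxy g (x, y)) *v v) \<le> Qg * norm d * \<bar>t\<bar>" for t
    using lip[of "(x, y + t *\<^sub>R d)" "(x, y)"] by (simp add: dist_norm norm_Pair mult_ac)
qed

lemma min_coefficient_mult_le:
  fixes \<mu> Lg a b :: real
  assumes pos: "\<mu> > 0" "Lg > 0" and \<mu>_le: "\<mu> \<le> Lg"
  shows "min (\<mu>\<^sup>2 / (4 * Lg\<^sup>2)) (\<mu> / 4) * (a\<^sup>2 + (Lg * a / \<mu> + b)\<^sup>2) \<le> 3 / 4 * a\<^sup>2 + \<mu> / 2 * b\<^sup>2"
proof -
  define c where "c = min (\<mu>\<^sup>2 / (4 * Lg\<^sup>2)) (\<mu> / 4)"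
  have c: "c \<le> \<mu> / 4" "c * (Lg / \<mu>)\<^sup>2 \<le> 1 / 4" "c \<le> 1 / 4" "c \<ge> 0"
  proof -
    show "c \<le> \<mu> / 4" "c \<ge> 0" using pos by (auto simp: c_def)
    have "c \<le> \<mu>\<^sup>2 / (4 * Lg\<^sup>2)" by (simp add: c_def)
    then show "c * (Lg / \<mu>)\<^sup>2 \<le> 1 / 4"
      using pos by (simp add: field_simps)
    have "\<mu>\<^sup>2 / (4 * Lg\<^sup>2) \<le> 1 / 4"
      using pos \<mu>_le by (simp add: field_simps power_mono)
    with \<open>c \<le> \<mu>\<^sup>2 / (4 * Lg\<^sup>2)\<close> show "c \<le> 1 / 4" by linarith
  qed
  have "(Lg * a / \<mu> + b)\<^sup>2 \<le> 2 * (Lg / \<mu>)\<^sup>2 * a\<^sup>2 + 2 * b\<^sup>2"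
    using sum_squares_bound[of "Lg * a / \<mu>" b] by (simp add: power2_sum field_simps)
  then have "c * (a\<^sup>2 + (Lg * a / \<mu> + b)\<^sup>2) \<le> c * (a\<^sup>2 + (2 * (Lg / \<mu>)\<^sup>2 * a\<^sup>2 + 2 * b\<^sup>2))"
    using c(4) by (intro mult_left_mono) auto
  also have "\<dots> = c * a\<^sup>2 + 2 * (c * (Lg / \<mu>)\<^sup>2) * a\<^sup>2 + 2 * c * b\<^sup>2"
    by (simp add: algebra_simps)
  also have "\<dots> \<le> 1 / 4 * a\<^sup>2 + 2 * (1 / 4) * a\<^sup>2 + 2 * (\<mu> / 4) * b\<^sup>2"
    using c by (intro add_mono mult_right_mono mult_left_mono) auto
  finally show ?thesis by (simp add: c_def)
qed

lemma penalty_error_terms_le: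
  fixes a \<gamma> \<mu> Lg Qg Mf \<beta> :: real
  assumes a: "a \<ge> 0" and \<gamma>: "\<gamma> \<ge> 0" and pos: "\<mu> > 0" "Lg > 0" "Qg > 0" "Mf > 0"
    and \<mu>_le: "\<mu> \<le> Lg"
    and \<beta>1: "\<beta> \<ge> 8 * Mf * Qg / \<mu>^3" and \<beta>2: "\<beta> \<ge> 4 * Mf * Qg * Lg / (\<mu>^3 * sqrt \<mu>)"
  defines "\<kappa> \<equiv> Qg * \<gamma> * Mf / \<mu>\<^sup>2"
  shows "\<kappa> * a + \<kappa> * (Lg * a / \<mu>) + \<beta> * \<kappa> * \<gamma> \<le> \<beta> * sqrt \<mu> * \<gamma> * a / 2 + \<mu> * (\<beta> * \<gamma>)\<^sup>2 / 8"
proof -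
  have "\<kappa> \<le> \<kappa> * (Lg / \<mu>)"
    using mult_left_mono[of 1 "Lg / \<mu>" \<kappa>] \<mu>_le pos \<gamma> by (simp add: \<kappa>_def)
  then have "\<kappa> * a \<le> \<kappa> * (Lg / \<mu>) * a"
    using a by (rule mult_right_mono)
  moreover have "\<kappa> * (Lg * a / \<mu>) = \<kappa> * (Lg / \<mu>) * a" by simp
  ultimately have "\<kappa> * a + \<kappa> * (Lg * a / \<mu>) \<le> 2 * (\<kappa> * (Lg / \<mu>)) * a"
    by linarith
  also have "\<dots> \<le> \<beta> * sqrt \<mu> * \<gamma> / 2 * a"
  proof (rule mult_right_mono[OF _ a])
    have "4 * Mf * Qg * Lg / (\<mu>^3 * sqrt \<mu>) * \<gamma> \<le> \<beta> * \<gamma>"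
      using \<beta>2 \<gamma> by (rule mult_right_mono)
    then show "2 * (\<kappa> * (Lg / \<mu>)) \<le> \<beta> * sqrt \<mu> * \<gamma> / 2"
      using pos by (simp add: \<kappa>_def field_simps power2_eq_square power3_eq_cube)
  qed
  moreover have "\<beta> * \<kappa> * \<gamma> \<le> \<mu> * (\<beta> * \<gamma>)\<^sup>2 / 8"
  proof -
    have \<beta>: "\<beta> > 0"
      using \<beta>1 pos by (smt (verit) divide_pos_pos mult_pos_pos zero_less_power)
    have "Qg * Mf / \<mu>\<^sup>2 \<le> \<beta> * \<mu> / 8"
      using \<beta>1 pos by (simp add: field_simps power2_eq_square power3_eq_cube)
    then have "\<beta> * \<gamma>\<^sup>2 * (Qg * Mf / \<mu>\<^sup>2) \<le> \<beta> * \<gamma>\<^sup>2 * (\<beta> * \<mu> / 8)"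
      using \<beta> by (intro mult_left_mono) auto
    then show ?thesis by (simp add: \<kappa>_def power2_eq_square field_simps)
  qed
  ultimately show ?thesis by simp
qed

lemma penalty_lower_bound_arith:
  fixes a \<gamma> \<mu> Lg Qg Mf \<beta> :: real
  assumes a: "a \<ge> 0" and \<gamma>: "\<gamma> \<ge> 0" and pos: "\<mu> > 0" "Lg > 0" "Qg > 0" "Mf > 0"
    and \<mu>_le: "\<mu> \<le> Lg"
    and \<beta>1: "\<beta> \<ge> 8 * Mf * Qg / \<mu>^3" and \<beta>2: "\<beta> \<ge> 4 * Mf * Qg * Lg / (\<mu>^3 * sqrt \<mu>)"
  defines "\<kappa> \<equiv> Qg * \<gamma> * Mf / \<mu>\<^sup>2"
  shows "min (\<mu>\<^sup>2 / (4 * Lg\<^sup>2)) (\<mu> / 4) * (a\<^sup>2 + (Lg * a / \<mu> + \<beta> * \<gamma>)\<^sup>2)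
         \<le> a\<^sup>2 - \<kappa> * a - \<kappa> * (Lg * a / \<mu>) - \<beta> * \<kappa> * \<gamma> + \<beta>\<^sup>2 * (\<mu> * \<gamma>\<^sup>2)"
proof -
  define s where "s = \<beta> * sqrt \<mu> * \<gamma>"
  have s2: "s\<^sup>2 = \<mu> * (\<beta> * \<gamma>)\<^sup>2" "\<beta>\<^sup>2 * (\<mu> * \<gamma>\<^sup>2) = \<mu> * (\<beta> * \<gamma>)\<^sup>2"
    using pos by (simp_all add: s_def power_mult_distrib)
  have "min (\<mu>\<^sup>2 / (4 * Lg\<^sup>2)) (\<mu> / 4) * (a\<^sup>2 + (Lg * a / \<mu> + \<beta> * \<gamma>)\<^sup>2) \<le> 3 / 4 * a\<^sup>2 + s\<^sup>2 / 2"
    using min_coefficient_mult_le[OF pos(1,2) \<mu>_le, of a "\<beta> * \<gamma>"] s2 by simp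
  also have "\<dots> \<le> a\<^sup>2 - s * a / 2 - s\<^sup>2 / 8 + s\<^sup>2"
  proof -
    have "0 \<le> (a / 2 - s / 2)\<^sup>2 + s\<^sup>2 / 8" by simp
    then show ?thesis by (simp add: power2_eq_square algebra_simps)
  qed
  also have "\<dots> \<le> a\<^sup>2 - \<kappa> * a - \<kappa> * (Lg * a / \<mu>) - \<beta> * \<kappa> * \<gamma> + \<beta>\<^sup>2 * (\<mu> * \<gamma>\<^sup>2)"
    using penalty_error_terms_le[OF a \<gamma> pos \<mu>_le \<beta>1 \<beta>2, folded \<kappa>_def s_def] s2 by linarith
  finally show ?thesis .
qed

lemma penalty_inner_lower_bound:
  fixes u e1 :: "'a::real_inner" and q e2 G :: "'b::real_inner" and \<mu> Lg Qg Mf \<beta> h :: real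
  assumes pos: "\<mu> > 0" "Lg > 0" "Qg > 0" "Mf > 0" and \<mu>_le: "\<mu> \<le> Lg"
    and \<beta>1: "\<beta> \<ge> 8 * Mf * Qg / \<mu>^3" and \<beta>2: "\<beta> \<ge> 4 * Mf * Qg * Lg / (\<mu>^3 * sqrt \<mu>)"
  defines "\<kappa> \<equiv> Qg * norm G * Mf / \<mu>\<^sup>2"
  assumes e1: "norm e1 \<le> \<kappa>" and e2: "norm e2 \<le> \<kappa>"
    and q: "norm q \<le> Lg * norm u / \<mu>" and h: "\<mu> * (norm G)\<^sup>2 \<le> h"
  shows "min (\<mu>\<^sup>2 / (4 * Lg\<^sup>2)) (\<mu> / 4) * (norm (u, - q + \<beta> *\<^sub>R G))\<^sup>2
         \<le> (norm u)\<^sup>2 + e1 \<bullet> u - e2 \<bullet> q + \<beta> * (e2 \<bullet> G) + \<beta>\<^sup>2 * h"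
proof -
  have \<beta>: "\<beta> > 0"
    using \<beta>1 pos by (smt (verit) divide_pos_pos mult_pos_pos zero_less_power)
  have \<kappa>: "\<kappa> \<ge> 0" using pos by (simp add: \<kappa>_def)
  have "\<bar>e1 \<bullet> u\<bar> \<le> \<kappa> * norm u"
    using Cauchy_Schwarz_ineq2[of e1 u] e1 by (meson mult_right_mono norm_ge_zero order_trans)
  moreover have "\<bar>e2 \<bullet> q\<bar> \<le> \<kappa> * (Lg * norm u / \<mu>)"
    using Cauchy_Schwarz_ineq2[of e2 q] e2 q \<kappa> by (meson mult_mono norm_ge_zero order_trans)
  moreover have "\<bar>e2 \<bullet> G\<bar> \<le> \<kappa> * norm G"
    using Cauchy_Schwarz_ineq2[of e2 G] e2 by (meson mult_right_mono norm_ge_zero order_trans)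
  then have "\<beta> * (- (e2 \<bullet> G)) \<le> \<beta> * (\<kappa> * norm G)"
    using \<beta> by (intro mult_left_mono) (auto dest: abs_le_D2)
  then have "\<beta> * (e2 \<bullet> G) \<ge> - (\<beta> * \<kappa> * norm G)"
    by (simp add: mult_ac)
  moreover have "\<beta>\<^sup>2 * (\<mu> * (norm G)\<^sup>2) \<le> \<beta>\<^sup>2 * h"
    using h by (simp add: mult_left_mono)
  ultimately have lower: "(norm u)\<^sup>2 - \<kappa> * norm u - \<kappa> * (Lg * norm u / \<mu>) - \<beta> * \<kappa> * norm G
      + \<beta>\<^sup>2 * (\<mu> * (norm G)\<^sup>2) \<le> (norm u)\<^sup>2 + e1 \<bullet> u - e2 \<bullet> q + \<beta> * (e2 \<bullet> G) + \<beta>\<^sup>2 * h"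
    by linarith
  have "norm (- q + \<beta> *\<^sub>R G) \<le> Lg * norm u / \<mu> + \<beta> * norm G"
    using norm_triangle_ineq[of "- q" "\<beta> *\<^sub>R G"] q \<beta> by simp
  then have "(norm (u, - q + \<beta> *\<^sub>R G))\<^sup>2 \<le> (norm u)\<^sup>2 + (Lg * norm u / \<mu> + \<beta> * norm G)\<^sup>2"
    by (simp add: norm_Pair power_mono)
  then have "min (\<mu>\<^sup>2 / (4 * Lg\<^sup>2)) (\<mu> / 4) * (norm (u, - q + \<beta> *\<^sub>R G))\<^sup>2
      \<le> min (\<mu>\<^sup>2 / (4 * Lg\<^sup>2)) (\<mu> / 4) * ((norm u)\<^sup>2 + (Lg * norm u / \<mu> + \<beta> * norm G)\<^sup>2)"
    using pos by (intro mult_left_mono) auto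
  also have "\<dots> \<le> (norm u)\<^sup>2 - \<kappa> * norm u - \<kappa> * (Lg * norm u / \<mu>) - \<beta> * \<kappa> * norm G
      + \<beta>\<^sup>2 * (\<mu> * (norm G)\<^sup>2)"
    unfolding \<kappa>_def by (rule penalty_lower_bound_arith[OF _ _ pos \<mu>_le \<beta>1 \<beta>2]) auto
  finally show ?thesis using lower by linarith
qed

lemma block_inner_eq:
  fixes H Hi Ty :: "real^'p^'p" and B Tx :: "real^'p^'n" and G dy :: "real^'p" and dx :: "real^'n"
  assumes Hi: "Hi ** H = mat 1"
  defines "u \<equiv> dx - (B ** Hi) *v dy" and "r \<equiv> Hi *v dy"
  defines "q \<equiv> transpose (B ** Hi) *v u"
  shows "(dx + (- (B ** Hi) + Tx ** Hi) *v dy + \<beta> *\<^sub>R (B *v G), (Ty ** Hi) *v dy + \<beta> *\<^sub>R (H *v G))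
           \<bullet> (u, - q + \<beta> *\<^sub>R G)
         = u \<bullet> u + (Tx *v r) \<bullet> u - (Ty *v r) \<bullet> q + \<beta> * ((Ty *v r) \<bullet> G) + \<beta>\<^sup>2 * ((H *v G) \<bullet> G)"
proof -
  have "(H *v G) \<bullet> q = (u v* (B ** Hi)) \<bullet> (H *v G)"
    by (simp add: q_def inner_commute)
  also have "\<dots> = u \<bullet> ((B ** Hi) *v (H *v G))"
    by (rule dot_lmul_matrix)
  also have "(B ** Hi) *v (H *v G) = B *v G"
    using Hi by (simp add: matrix_vector_mul_assoc flip: matrix_mul_assoc)
  finally have "(H *v G) \<bullet> q = u \<bullet> (B *v G)" .
  moreover have "(dx + (- (B ** Hi) + Tx ** Hi) *v dy + \<beta> *\<^sub>R (B *v G), (Ty ** Hi) *v dy + \<beta> *\<^sub>R (H *v G))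
      = (u + Tx *v r + \<beta> *\<^sub>R (B *v G), Ty *v r + \<beta> *\<^sub>R (H *v G))"
    by (simp add: u_def r_def matrix_vector_mul_assoc[symmetric] algebra_simps)
  ultimately show ?thesis
    by (simp add: inner_commute algebra_simps) (simp add: power2_eq_square)
qed

lemma block_inner_lower_bound:
  fixes H Ty :: "real^'p^'p" and B Tx :: "real^'p^'n" and G dy :: "real^'p" and dx :: "real^'n"
    and \<mu> Lg Qg Mf \<beta> :: real
  defines "Hi \<equiv> matrix_inv H"
  assumes pos: "\<mu> > 0" "Lg > 0" "Qg > 0" "Mf > 0" and \<mu>_le: "\<mu> \<le> Lg"
    and \<beta>1: "\<beta> \<ge> 8 * Mf * Qg / \<mu>^3" and \<beta>2: "\<beta> \<ge> 4 * Mf * Qg * Lg / (\<mu>^3 * sqrt \<mu>)"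
    and coercive: "\<And>v. \<mu> * (v \<bullet> v) \<le> v \<bullet> (H *v v)"
    and B: "\<And>u. norm (u v* B) \<le> Lg * norm u"
    and Tx: "\<And>v. norm (Tx *v v) \<le> Qg * norm (Hi *v G) * norm v"
    and Ty: "\<And>v. norm (Ty *v v) \<le> Qg * norm (Hi *v G) * norm v"
    and dy: "norm dy \<le> Mf"
  defines "w \<equiv> (dx - (B ** Hi) *v dy, - (transpose (B ** Hi) *v (dx - (B ** Hi) *v dy)) + \<beta> *\<^sub>R G)"
  shows "min (\<mu>\<^sup>2 / (4 * Lg\<^sup>2)) (\<mu> / 4) * (norm w)\<^sup>2
    \<le> (dx + (- (B ** Hi) + Tx ** Hi) *v dy + \<beta> *\<^sub>R (B *v G), (Ty ** Hi) *v dy + \<beta> *\<^sub>R (H *v G)) \<bullet> w"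
proof -
  define u where "u = dx - (B ** Hi) *v dy"
  define r where "r = Hi *v dy"
  define q where "q = transpose (B ** Hi) *v u"
  have Hi_le: "norm (Hi *v v) \<le> norm v / \<mu>" for v
    unfolding Hi_def by (rule norm_matrix_inv_mult_le[OF pos(1) coercive])
  have "norm r \<le> Mf / \<mu>"
    using Hi_le[of dy] dy pos(1) unfolding r_def by (smt (verit) divide_right_mono)
  then have "norm (Hi *v G) * norm r \<le> norm G / \<mu> * (Mf / \<mu>)"
    using Hi_le[of G] pos(1) by (intro mult_mono) auto
  then have "Qg * (norm (Hi *v G) * norm r) \<le> Qg * (norm G / \<mu> * (Mf / \<mu>))"
    using pos(3) by (intro mult_left_mono) auto
  then have T: "norm (Tx *v r) \<le> Qg * norm G * Mf / \<mu>\<^sup>2" "norm (Ty *v r) \<le> Qg * norm G * Mf / \<mu>\<^sup>2"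
    using Tx[of r] Ty[of r] by (simp_all add: power2_eq_square mult_ac)
  have "q = transpose Hi *v (transpose B *v u)"
    by (simp only: q_def matrix_vector_mul_assoc matrix_transpose_mul)
  then have "norm q \<le> norm (transpose B *v u) / \<mu>"
    unfolding Hi_def by (metis norm_transpose_matrix_inv_mult_le[OF pos(1) coercive])
  also have "\<dots> \<le> Lg * norm u / \<mu>"
    using B[of u] pos(1) by (simp add: divide_right_mono)
  finally have q_le: "norm q \<le> Lg * norm u / \<mu>" .
  have Hi: "Hi ** H = mat 1"
    using coercive_matrix_inv[OF pos(1) coercive] by (simp add: Hi_def)
  have inner: "(dx + (- (B ** Hi) + Tx ** Hi) *v dy + \<beta> *\<^sub>R (B *v G), (Ty ** Hi) *v dy + \<beta> *\<^sub>R (H *v G)) \<bullet> w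
      = (norm u)\<^sup>2 + (Tx *v r) \<bullet> u - (Ty *v r) \<bullet> q + \<beta> * ((Ty *v r) \<bullet> G) + \<beta>\<^sup>2 * ((H *v G) \<bullet> G)"
    using Hi unfolding w_def u_def r_def q_def power2_norm_eq_inner by (rule block_inner_eq)
  have w: "w = (u, - q + \<beta> *\<^sub>R G)"
    by (simp add: w_def u_def q_def)
  have "\<mu> * (norm G)\<^sup>2 \<le> (H *v G) \<bullet> G"
    using coercive[of G] by (simp add: power2_norm_eq_inner inner_commute)
  then show ?thesis
    unfolding inner unfolding w by (rule penalty_inner_lower_bound[OF pos \<mu>_le \<beta>1 \<beta>2 T q_le])
qed

lemma powr_seven_halves:
  fixes x :: real
  assumes "x > 0"
  shows "x powr 3.5 = x ^ 3 * sqrt x"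
proof -
  have "x powr 3.5 = x powr 3 * x powr (1 / 2)"
    by (simp flip: powr_add)
  then show ?thesis using assms by (simp add: powr_half_sqrt powr_realpow)
qed

lemma bdd_above_inner_Dh:
  assumes "compact (Df (x, Amap g x y))"
  shows "bdd_above ((\<lambda>z. z \<bullet> w) ` Dh g Df \<beta> x y)"
proof -
  have "compact (Dh g Df \<beta> x y)"
    unfolding Dh_def case_prod_unfold
    by (intro compact_continuous_image continuous_intros assms
          linear_continuous_on[OF bounded_linear_compose[OF matrix_vector_mul_bounded_linear bounded_linear_snd]])
  then show ?thesis
    by (intro bounded_imp_bdd_above compact_imp_bounded compact_continuous_image continuous_intros)
qed

lemma Dh_Dp_hat_inner_lower_bound:
  fixes g :: "(real^'n) \<times> (real^'p) \<Rightarrow> real" and x dx :: "real^'n" and y dy :: "real^'p"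
  assumes pos: "\<mu> > 0" "Lg > 0" "Qg > 0" "Mf > 0"
    and \<beta>1: "\<beta> \<ge> 8 * Mf * Qg / \<mu>^3" and \<beta>2: "\<beta> \<ge> 4 * Mf * Qg * Lg / (\<mu>^3 * sqrt \<mu>)"
    and diff: "\<And>z. grady g differentiable (at z)" and lip: "Lg-lipschitz_on UNIV (grady g)"
    and coercive: "\<And>z v. \<mu> * (v \<bullet> v) \<le> v \<bullet> (Hyy g z *v v)"
    and D': "\<And>z. (Hyy g has_derivative blinfun_apply (D' z)) (at z)" "continuous_on UNIV D'"
    and Hyy_lip: "\<And>z z'. onorm (\<lambda>v. (Hyy g z - Hyy g z') *v v) \<le> Qg * dist z z'"
    and Hxy_lip: "\<And>z z'. onorm (\<lambda>v. (Hxy g z - Hxy g z') *v v) \<le> Qg * dist z z'"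
    and dy: "norm dy \<le> Mf"
  defines "w \<equiv> WTmap g x y (Wmap g x y (dx, dy)) + (0, \<beta> *\<^sub>R grady g (x, y))"
  shows "min (\<mu>\<^sup>2 / (4 * Lg\<^sup>2)) (\<mu> / 4) * (norm w)\<^sup>2
    \<le> (dx + JAx g x y *v dy + \<beta> *\<^sub>R (Hxy g (x, y) *v grady g (x, y)),
        JAy g x y *v dy + \<beta> *\<^sub>R (Hyy g (x, y) *v grady g (x, y))) \<bullet> w"
proof -
  have \<mu>_le: "\<mu> \<le> Lg"
    using coercive by (rule coercivity_le_lipschitz[OF _ lip diff])
  show ?thesis
    unfolding w_def WTmap_def Wmap_def JAx_def JAy_def Let_def
    using block_inner_lower_bound[OF pos \<mu>_le \<beta>1 \<beta>2 coercive norm_vector_matrix_mult_Hxy_le[OF lip diff]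
        norm_D3xyy_mult_le[OF diff D' Hxy_lip] norm_D3yyy_mult_le[OF D'(1) Hyy_lip] dy]
    by simp
qed

theorem proposition4p8:
  fixes f g :: "(real^'n) \<times> (real^'p) \<Rightarrow> real"
    and Df :: "(real^'n) \<times> (real^'p) \<Rightarrow> ((real^'n) \<times> (real^'p)) set"
    and Mf \<mu> Lg Qg \<beta> :: real
  assumes pos: "Mf > 0" "\<mu> > 0" "Lg > 0" "Qg > 0"
    and f_lip: "Mf-lipschitz_on UNIV f"
    and g_diff: "\<forall>z. g differentiable (at z)"
    and g_diff2: "\<forall>z. (\<lambda>u. (gradx g u, grady g u)) differentiable (at z)"
    and H_pd: "\<forall>z v. \<mu> * (v \<bullet> v) \<le> v \<bullet> (Hyy g z *v v)"
    and grad_lip: "Lg-lipschitz_on UNIV (\<lambda>u. (gradx g u, grady g u))"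
    and Hyy_lip: "\<forall>z z'. onorm (\<lambda>v. (Hyy g z - Hyy g z') *v v) \<le> Qg * dist z z'"
    and Hxy_lip: "\<forall>z z'. onorm (\<lambda>v. (Hxy g z - Hxy g z') *v v) \<le> Qg * dist z z'"
    and Hyy_C1: "\<exists>D'. (\<forall>z. (Hyy g has_derivative blinfun_apply (D' z)) (at z)) \<and> continuous_on UNIV D'"
    and f_pot: "potential_of f Df"
    and Df_vals: "\<forall>z. compact (Df z) \<and> convex (Df z) \<and> (\<forall>d\<in>Df z. norm d \<le> Mf)"
    and beta: "\<beta> \<ge> max (8 * Mf * Qg / \<mu> ^ 3) (4 * Mf * Qg * Lg / \<mu> powr 3.5)"
  shows "\<forall>x y. \<forall>w \<in> Dp_hat g Df \<beta> x y.
           Sup ((\<lambda>z. z \<bullet> w) ` Dh g Df \<beta> x y) \<ge> min (\<mu>^2 / (4 * Lg^2)) (\<mu> / 4) * (norm w)^2"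
proof (intro allI ballI)
  (* The bound is pointwise in d. *)
  fix x y w
  assume "w \<in> Dp_hat g Df \<beta> x y"
  then obtain dx dy where d: "(dx, dy) \<in> Df (x, Amap g x y)"
    and w: "w = WTmap g x y (Wmap g x y (dx, dy)) + (0, \<beta> *\<^sub>R grady g (x, y))"
    unfolding Dp_hat_def by auto
  obtain D' where D': "\<And>z. (Hyy g has_derivative blinfun_apply (D' z)) (at z)" "continuous_on UNIV D'"
    using Hyy_C1 by blast
  have diff: "grady g differentiable (at z)" for z
    using g_diff2 by (blast intro: differentiable_snd_pair)
  define z where "z = (dx + JAx g x y *v dy + \<beta> *\<^sub>R (Hxy g (x, y) *v grady g (x, y)),
                       JAy g x y *v dy + \<beta> *\<^sub>R (Hyy g (x, y) *v grady g (x, y)))"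
  have "norm dy \<le> Mf"
    using Df_vals d by (metis norm_snd_le order_trans)
  then have "min (\<mu>^2 / (4 * Lg^2)) (\<mu> / 4) * (norm w)^2 \<le> z \<bullet> w"
    unfolding w z_def
    using beta powr_seven_halves[OF pos(2)]
    by (intro Dh_Dp_hat_inner_lower_bound[OF pos(2,3,4,1) _ _ diff lipschitz_on_snd_pair[OF grad_lip] _ D']
          H_pd[rule_format] Hyy_lip[rule_format] Hxy_lip[rule_format]) auto
  moreover have "z \<in> Dh g Df \<beta> x y"
    using d unfolding Dh_def z_def by force
  moreover have "bdd_above ((\<lambda>z. z \<bullet> w) ` Dh g Df \<beta> x y)"
    using Df_vals by (intro bdd_above_inner_Dh) auto
  ultimately show "Sup ((\<lambda>z. z \<bullet> w) ` Dh g Df \<beta> x y) \<ge> min (\<mu>^2 / (4 * Lg^2)) (\<mu> / 4) * (norm w)^2"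
    by (meson cSup_upper imageI order_trans)
qed

end
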